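(* There is no element of $\mathcal{D}'$ strictly between $\sqrt3$ and $\frac{7+\sqrt{13}}{6}$.
   Context: For an infinite word $w$ with infinitely many palindromic prefixes (the empty word counting as one), let $(n_i)_{i\ge1}$ be the increasing sequence of their lengths and $\delta(w)=\limsup n_{i+1}/n_i$. Characteristic Sturmian word: for positive integers $s_1,s_2,\dots$ and letters $a\ne b$, let $\sigma_0=a$, $\sigma_1=a^{s_1-1}b$, $\sigma_n=\sigma_{n-1}^{s_n}\sigma_{n-2}$ ($n\ge2$); the limit of the $\sigma_n$ is the characteristic Sturmian word of slope $[0;s_1,s_2,\dots]$. $\mathcal{D}'$ is the set of values $\delta(w)$ where $w$ is either a periodic word with a palindromic period (i.e. $w=uuu\cdots$ with $u$ a nonempty palindrome) or a characteristic Sturmian word. *)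

theory Defs
  imports Complex_Main "HOL-Library.Infinite_Set" "HOL-Library.Liminf_Limsup"
    "HOL-Library.Extended_Real"
begin

text \<open>Infinite words are functions nat => 'a (letter i is w i, i >= 0).
  The prefix of length n is palindromic iff w i = w (n-1-i) for all i < n;
  the empty prefix (n = 0) counts as palindromic.\<close>

definition pal_prefix :: "(nat \<Rightarrow> 'a) \<Rightarrow> nat \<Rightarrow> bool" where
  "pal_prefix w n \<longleftrightarrow> (\<forall>i<n. w i = w (n - 1 - i))"

definition pal_lengths :: "(nat \<Rightarrow> 'a) \<Rightarrow> nat set" where
  "pal_lengths w = {n. pal_prefix w n}"

text \<open>delta(w) = limsup n_(i+1)/n_i, where (n_i) enumerates the palindromic
  prefix lengths increasingly (enumerate is 0-indexed).\<close>

definition delta :: "(nat \<Rightarrow> 'a) \<Rightarrow> ereal" where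
  "delta w = limsup (\<lambda>i. ereal (real (enumerate (pal_lengths w) (Suc i))
                                / real (enumerate (pal_lengths w) i)))"

definition periodic_pal :: "(nat \<Rightarrow> 'a) \<Rightarrow> bool" where
  "periodic_pal w \<longleftrightarrow> (\<exists>u. u \<noteq> [] \<and> rev u = u \<and> (\<forall>i. w i = u ! (i mod length u)))"

text \<open>Standard sequence sigma_n for directive sequence s_1, s_2, ... (s 0 unused).\<close>

fun sigma :: "(nat \<Rightarrow> nat) \<Rightarrow> 'a \<Rightarrow> 'a \<Rightarrow> nat \<Rightarrow> 'a list" where
  "sigma s a b 0 = [a]"
| "sigma s a b (Suc 0) = replicate (s 1 - 1) a @ [b]"
| "sigma s a b (Suc (Suc n)) =
     concat (replicate (s (Suc (Suc n))) (sigma s a b (Suc n))) @ sigma s a b n"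

text \<open>w is the characteristic Sturmian word of slope [0; s_1, s_2, ...]: the limit
  of the sigma_n, i.e. every sigma_n (n >= 1) is a prefix of w.\<close>

definition char_sturmian :: "(nat \<Rightarrow> 'a) \<Rightarrow> bool" where
  "char_sturmian w \<longleftrightarrow>
     (\<exists>s a b. a \<noteq> b \<and> (\<forall>k\<ge>1. s k > 0) \<and>
        (\<forall>n\<ge>1. \<forall>i<length (sigma s a b n). w i = sigma s a b n ! i))"

definition Dprime :: "ereal set" where
  "Dprime = {delta w | w :: nat \<Rightarrow> nat.
               infinite (pal_lengths w) \<and> (periodic_pal w \<or> char_sturmian w)}"

end

theory Submission
  imports Defs
begin

text \<open>Write \<open>q\<^sub>n = |\<sigma>\<^sub>n|\<close> and let \<open>c\<^sub>n\<close> be the central word of \<open>\<sigma>\<^bsub>n+1\<^esub>\<sigma>\<^sub>n\<close>,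
  a palindrome of length \<open>q\<^bsub>n+1\<^esub> + q\<^sub>n - 2\<close>. The palindromic prefixes of a
  characteristic Sturmian word are those of length less than \<open>|c\<^sub>0| = s\<^sub>1 - 1\<close> and the
  words \<open>\<sigma>\<^bsub>n+1\<^esub>\<^sup>j c\<^sub>n\<close> with \<open>j < s\<^bsub>n+2\<^esub>\<close>. No other prefix is a palindrome: one of
  length \<open>N\<close> between those of lengths \<open>P\<close> and \<open>P + q\<^bsub>n+1\<^esub>\<close> would reflect to one of length
  \<open>2P - N\<close> followed by the same letter as the one of length \<open>P\<close>. Consecutive lengths thus
  differ by \<open>q\<^bsub>n+1\<^esub>\<close>, the worst ratio being \<open>1 + q\<^bsub>n+1\<^esub> / |c\<^sub>n|\<close>, so \<open>\<delta>\<close> is governed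
  by the ratios \<open>q\<^sub>n / q\<^bsub>n+1\<^esub>\<close>. If \<open>s\<^sub>m \<ge> 3\<close> infinitely often, then infinitely often
  \<open>q\<^sub>n \<le> r q\<^bsub>n+1\<^esub>\<close> for the root \<open>r\<close> of \<open>r\<^sup>2 + 3r = 1\<close>, whence
  \<open>\<delta> \<ge> 1 + 1/(1 + r) = (7 + \<surd>13)/6\<close>. If eventually \<open>s\<^sub>m \<le> 2\<close>, then for every \<open>\<epsilon> > 0\<close>
  the ratios are eventually at least \<open>\<rho> - \<epsilon>\<close>, where \<open>\<rho>\<close> is the root of \<open>2\<rho>\<^sup>2 + 2\<rho> = 1\<close>,
  whence \<open>\<delta> \<le> 1 + 1/(1 + \<rho>) = \<surd>3\<close>. A word with a palindromic period \<open>u\<close> has all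
  multiples of \<open>|u|\<close> as palindromic prefix lengths, so its \<open>\<delta>\<close> is at most 1.\<close>

lemma enumerate_Suc_le:
  fixes S :: "nat set"
  assumes "infinite S" "y \<in> S" "enumerate S i < y"
  shows "enumerate S (Suc i) \<le> y"
  using assms by (simp add: enumerate_Suc'' Least_le)

lemma enumerate_Suc_eq_next:
  fixes S :: "nat set"
  assumes inf: "infinite S" and i: "enumerate S i = n" and n': "n' \<in> S" "n < n'"
    and gap: "{n<..<n'} \<inter> S = {}"
  shows "enumerate S (Suc i) = n'"
proof -
  have "enumerate S (Suc i) \<le> n'" using enumerate_Suc_le[OF inf n'(1)] i n' by simp
  moreover have "enumerate S (Suc i) \<in> S" using enumerate_in_set[OF inf] .
  moreover have "n < enumerate S (Suc i)" using enumerate_step[OF inf, of i] i by simp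
  ultimately show ?thesis using gap by fastforce
qed

lemma limsup_enumerate_ratio_le:
  fixes S :: "nat set" and B :: real
  assumes inf: "infinite S"
    and succ: "\<And>e. 0 < e \<Longrightarrow> \<exists>N. \<forall>n\<in>S. N \<le> n \<longrightarrow> (\<exists>y\<in>S. n < y \<and> real y \<le> (B + e) * real n)"
  shows "limsup (\<lambda>i. ereal (real (enumerate S (Suc i)) / real (enumerate S i))) \<le> ereal B"
proof (rule ereal_le_epsilon2)
  fix e :: real assume "0 < e"
  then obtain N where N: "\<forall>n\<in>S. N \<le> n \<longrightarrow> (\<exists>y\<in>S. n < y \<and> real y \<le> (B + e) * real n)"
    using succ by blast
  have "real (enumerate S (Suc i)) / real (enumerate S i) \<le> B + e" if "N \<le> i" for i
  proof -
    have "N \<le> enumerate S i" using le_enumerate[OF inf, of i] that by linarith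
    then obtain y where y: "y \<in> S" "enumerate S i < y" "real y \<le> (B + e) * real (enumerate S i)"
      using N enumerate_in_set[OF inf] by blast
    have pos: "0 < enumerate S i" using y(2,3) by (cases "enumerate S i") auto
    have "real (enumerate S (Suc i)) / real (enumerate S i) \<le> real y / real (enumerate S i)"
      using enumerate_Suc_le[OF inf y(1,2)] by (simp add: divide_right_mono)
    also have "\<dots> \<le> B + e" using y(3) pos by (simp add: divide_le_eq)
    finally show ?thesis .
  qed
  then have "limsup (\<lambda>i. ereal (real (enumerate S (Suc i)) / real (enumerate S i))) \<le> ereal (B + e)"
    by (intro Limsup_bounded) (auto simp: eventually_sequentially)
  then show "limsup (\<lambda>i. ereal (real (enumerate S (Suc i)) / real (enumerate S i)))
      \<le> ereal B + ereal e"
    by simp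
qed

lemma limsup_enumerate_ratio_ge:
  fixes S :: "nat set" and B :: real
  assumes inf: "infinite S"
    and gaps: "\<And>N. \<exists>n\<in>S. \<exists>n'\<in>S. N \<le> n \<and> n < n' \<and> {n<..<n'} \<inter> S = {} \<and> B * real n \<le> real n'"
  shows "ereal B \<le> limsup (\<lambda>i. ereal (real (enumerate S (Suc i)) / real (enumerate S i)))"
proof (rule ccontr)
  let ?R = "\<lambda>i. ereal (real (enumerate S (Suc i)) / real (enumerate S i))"
  assume "\<not> ereal B \<le> limsup ?R"
  then have "eventually (\<lambda>i. ?R i < ereal B) sequentially" by (intro Limsup_lessD) simp
  then obtain N where N: "\<And>i. N \<le> i \<Longrightarrow> ?R i < ereal B" unfolding eventually_sequentially by blast
  obtain n n' where nn: "n \<in> S" "n' \<in> S" "Suc (enumerate S N) \<le> n" "n < n'"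
    "{n<..<n'} \<inter> S = {}" "B * real n \<le> real n'"
    using gaps by blast
  obtain i where i: "enumerate S i = n" using enumerate_Ex[OF inf nn(1)] by blast
  have "N < i" using i nn(3) inf by (metis Suc_le_lessD enumerate_mono_iff)
  have "?R i = ereal (real n' / real n)"
    using enumerate_Suc_eq_next[OF inf i nn(2,4,5)] i by simp
  moreover have "B \<le> real n' / real n" using nn(3,6) by (simp add: le_divide_eq)
  ultimately show False using N[of i] \<open>N < i\<close> by simp
qed

lemma pal_prefix_reflect:
  assumes pal: "pal_prefix w P" and pal': "pal_prefix w (P + d)" and d: "0 < d" "d \<le> P"
  shows "pal_prefix w (P - d) \<and> w (P - d) = w P"
proof -
  have sym: "\<And>j. j < P \<Longrightarrow> w j = w (P - 1 - j)" using pal unfolding pal_prefix_def by blast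
  have sym': "\<And>j. j < P + d \<Longrightarrow> w j = w (P + d - 1 - j)" using pal' unfolding pal_prefix_def by blast
  have period: "w i = w (i - d)" if "d \<le> i" "i < P + d" for i
  proof -
    have "w i = w (P + d - 1 - i)" using sym' that(2) .
    also have "\<dots> = w (P - 1 - (P + d - 1 - i))" using that d by (intro sym) linarith
    also have "P - 1 - (P + d - 1 - i) = i - d" using that d by linarith
    finally show ?thesis .
  qed
  have "pal_prefix w (P - d)" unfolding pal_prefix_def
  proof (intro allI impI)
    fix i assume i: "i < P - d"
    have "w i = w (P - 1 - i)" using i by (intro sym) linarith
    also have "\<dots> = w (P - 1 - i - d)" using i by (intro period) linarith+
    also have "P - 1 - i - d = P - d - 1 - i" by simp
    finally show "w i = w (P - d - 1 - i)" .
  qed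
  moreover have "w P = w (P - d)" using d by (intro period) linarith+
  ultimately show ?thesis by simp
qed

text \<open>\<open>P'\<close> certifies that no palindromic prefix length lies strictly between \<open>P\<close> and \<open>P'\<close>,
  provided the lengths below are known to be in \<open>C\<close>: such a length \<open>N\<close> would reflect to a
  palindromic prefix length \<open>2P - N\<close> followed by the letter \<open>w P\<close>.\<close>

definition certified_successor :: "(nat \<Rightarrow> 'a) \<Rightarrow> nat set \<Rightarrow> nat \<Rightarrow> nat \<Rightarrow> bool" where
  "certified_successor w C P P' \<longleftrightarrow> P < P' \<and> P' \<le> 2 * P + 1 \<and>
     (\<forall>Q\<in>C. 2 * P < Q + P' \<longrightarrow> Q < P \<longrightarrow> w Q \<noteq> w P)"

lemma certified_successor_not_pal:
  assumes below: "\<And>Q. Q < N \<Longrightarrow> pal_prefix w Q \<Longrightarrow> Q \<in> C"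
    and C: "C \<subseteq> pal_lengths w" "P \<in> C" and cert: "certified_successor w C P P'"
    and N: "P < N" "N < P'"
  shows "\<not> pal_prefix w N"
proof
  assume pal: "pal_prefix w N"
  define d where "d = N - P"
  have d: "0 < d" "d \<le> P" "N = P + d" using N cert unfolding d_def certified_successor_def by auto
  have "pal_prefix w P" using C unfolding pal_lengths_def by auto
  then have reflect: "pal_prefix w (P - d) \<and> w (P - d) = w P"
    using pal_prefix_reflect pal d by auto
  then have "P - d \<in> C" using below d by simp
  moreover have "2 * P < (P - d) + P'" "P - d < P" using d N by auto
  ultimately show False using cert reflect unfolding certified_successor_def by blast
qed

lemma pal_lengths_eq_certified:
  assumes C: "C \<subseteq> pal_lengths w" "0 \<in> C"
    and succ: "\<And>P. P \<in> C \<Longrightarrow> \<exists>P'\<in>C. certified_successor w C P P'"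
  shows "pal_lengths w = C"
proof -
  have "N \<in> C" if "pal_prefix w N" for N
    using that
  proof (induction N rule: less_induct)
    case (less N)
    define M where "M = Max {x\<in>C. x \<le> N}"
    have fin: "finite {x\<in>C. x \<le> N}" by simp
    have M: "M \<in> C" "M \<le> N" using Max_in[OF fin] C(2) unfolding M_def by fastforce+
    obtain P' where P': "P' \<in> C" "certified_successor w C M P'" using succ M(1) by blast
    show "N \<in> C"
    proof (rule ccontr)
      assume "N \<notin> C"
      then have "M < N" using M by (cases "M = N") auto
      moreover have "N < P'"
      proof (rule ccontr)
        assume "\<not> N < P'"
        then have "P' \<le> M" using P'(1) fin unfolding M_def by (auto intro!: Max_ge)
        then show False using P'(2) unfolding certified_successor_def by simp
      qed
      ultimately show False
        using certified_successor_not_pal[OF less.IH C(1) M(1) P'(2)] less.prems by blast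
    qed
  qed
  then show ?thesis using C(1) unfolding pal_lengths_def by blast
qed

lemma pal_prefix_mult_period:
  assumes u: "rev u = u" and w: "\<And>i. w i = u ! (i mod length u)"
  shows "pal_prefix w (k * length u)"
  unfolding pal_prefix_def
proof (intro allI impI)
  fix i assume i: "i < k * length u"
  define p where "p = length u"
  define r where "r = i mod p"
  have p: "0 < p" using i unfolding p_def by (cases "length u") auto
  have r: "r < p" unfolding r_def using p by simp
  have i_eq: "i = i div p * p + r" unfolding r_def by simp
  have "i div p < k" using i p unfolding p_def by (simp add: div_less_iff_less_mult)
  then obtain t where "k = Suc (i div p + t)" by (metis less_iff_Suc_add)
  then have "k * p = i div p * p + p + t * p" by (simp add: algebra_simps)
  then have "k * p - 1 - i = (p - 1 - r) + t * p" using i_eq r by linarith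
  then have "(k * p - 1 - i) mod p = (p - 1 - r) mod p" by (simp only: mod_mult_self1)
  also have "\<dots> = p - 1 - r" using r by simp
  finally have "(k * p - 1 - i) mod p = p - 1 - r" .
  then have "w (k * p - 1 - i) = rev u ! r" using w r unfolding p_def by (simp add: rev_nth)
  then show "w i = w (k * length u - 1 - i)" using u w unfolding r_def p_def by simp
qed

lemma delta_periodic_le_1:
  assumes "periodic_pal w" and inf: "infinite (pal_lengths w)"
  shows "delta w \<le> 1"
proof -
  obtain u where u: "u \<noteq> []" "rev u = u" "\<And>i. w i = u ! (i mod length u)"
    using assms(1) unfolding periodic_pal_def by blast
  define p where "p = length u"
  have p: "0 < p" using u(1) unfolding p_def by simp
  have "limsup (\<lambda>i. ereal (real (enumerate (pal_lengths w) (Suc i)) /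
      real (enumerate (pal_lengths w) i))) \<le> ereal 1"
  proof (rule limsup_enumerate_ratio_le[OF inf])
    fix e :: real assume e: "0 < e"
    show "\<exists>N. \<forall>n\<in>pal_lengths w. N \<le> n \<longrightarrow>
        (\<exists>y\<in>pal_lengths w. n < y \<and> real y \<le> (1 + e) * real n)"
    proof (intro exI ballI impI)
      fix n assume n: "nat \<lceil>real p / e\<rceil> \<le> n"
      let ?y = "(n div p + 1) * p"
      have "n div p * p + n mod p = n" "n mod p < p"
        using div_mult_mod_eq mod_less_divisor[OF p] by blast+
      moreover have "?y = n div p * p + p" by simp
      ultimately have y: "n < ?y" "?y \<le> n + p" by linarith+
      have "real p \<le> e * real n" using n e by (simp add: divide_le_eq mult.commute)
      then have "real ?y \<le> (1 + e) * real n"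
        using of_nat_mono[OF y(2), where 'a = real] by (simp add: algebra_simps)
      moreover have "?y \<in> pal_lengths w"
        using pal_prefix_mult_period[OF u(2,3)] unfolding pal_lengths_def p_def by blast
      ultimately show "\<exists>y\<in>pal_lengths w. n < y \<and> real y \<le> (1 + e) * real n"
        using y(1) by blast
    qed
  qed
  then show ?thesis unfolding delta_def one_ereal_def .
qed

abbreviation list_pow :: "'a list \<Rightarrow> nat \<Rightarrow> 'a list" where
  "list_pow x k \<equiv> concat (replicate k x)"

lemma list_pow_commute: "x @ list_pow x k = list_pow x k @ x"
  by (induction k) auto

lemma rev_list_pow: "rev (list_pow x k) = list_pow (rev x) k"
  by (induction k) (auto simp: list_pow_commute)

lemma length_list_pow: "length (list_pow x k) = k * length x"
  by (induction k) auto

lemma list_pow_conjugate: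
  assumes "x @ p = p @ rev x"
  shows "list_pow x k @ p = p @ list_pow (rev x) k"
proof (induction k)
  case (Suc k)
  have "list_pow x (Suc k) @ p = x @ p @ list_pow (rev x) k" using Suc by simp
  also have "\<dots> = p @ rev x @ list_pow (rev x) k" using assms by (metis append.assoc)
  finally show ?case by simp
qed simp

text \<open>Central pairs abstract consecutive standard words \<open>x = \<sigma>\<^bsub>n+1\<^esub>\<close>, \<open>y = \<sigma>\<^sub>n\<close>:
  \<open>xy\<close> and \<open>yx\<close> differ only in their last two letters, and their common prefix
  \<open>p\<close> (the central word) is a palindrome, as are \<open>xp\<close> and \<open>yp\<close>.\<close>

definition central_pair :: "'a list \<Rightarrow> 'a list \<Rightarrow> 'a list \<Rightarrow> 'a \<Rightarrow> 'a \<Rightarrow> bool" where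
  "central_pair p x y \<alpha> \<beta> \<longleftrightarrow> rev p = p \<and> rev (x @ p) = x @ p \<and> rev (y @ p) = y @ p \<and>
     x @ y = p @ [\<alpha>, \<beta>] \<and> y @ x = p @ [\<beta>, \<alpha>]"

lemma central_pair_pal_pow:
  assumes "central_pair p x y \<alpha> \<beta>"
  shows "rev (list_pow x k @ p) = list_pow x k @ p"
proof -
  have "x @ p = p @ rev x" using assms unfolding central_pair_def by (metis rev_append)
  from list_pow_conjugate[OF this] show ?thesis
    using assms unfolding central_pair_def by (simp add: rev_list_pow)
qed

lemma central_pair_step:
  assumes pair: "central_pair p x y \<alpha> \<beta>"
  shows "central_pair (list_pow x k @ p) (list_pow x k @ y) x \<beta> \<alpha>"
proof -
  let ?X = "list_pow x k"
  have p: "rev p = p" and yp: "y @ p = p @ rev y" and xy: "x @ y = p @ [\<alpha>, \<beta>]"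
    and yx: "y @ x = p @ [\<beta>, \<alpha>]"
    using pair unfolding central_pair_def by (metis rev_append)+
  have Xp: "?X @ p = p @ rev ?X"
    using central_pair_pal_pow[OF pair, of k] p by (metis rev_append)
  have "(?X @ y) @ (?X @ p) = ?X @ p @ rev y @ rev ?X" using Xp yp by (metis append.assoc)
  then have "rev ((?X @ y) @ (?X @ p)) = (?X @ y) @ (?X @ p)"
    using p Xp by (simp add: rev_list_pow)
  moreover have "rev (x @ (?X @ p)) = x @ (?X @ p)"
    using central_pair_pal_pow[OF pair, of "Suc k"] by simp
  moreover have "(?X @ y) @ x = (?X @ p) @ [\<beta>, \<alpha>]" using yx by simp
  moreover have "x @ (?X @ y) = (?X @ p) @ [\<alpha>, \<beta>]"
    using xy by (metis append.assoc list_pow_commute)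
  ultimately show ?thesis
    using central_pair_pal_pow[OF pair, of k] unfolding central_pair_def by blast
qed

fun central :: "(nat \<Rightarrow> nat) \<Rightarrow> 'a \<Rightarrow> 'a \<Rightarrow> nat \<Rightarrow> 'a list" where
  "central s a b 0 = replicate (s 1 - 1) a"
| "central s a b (Suc n) = list_pow (sigma s a b (Suc n)) (s (Suc (Suc n))) @ central s a b n"

definition last_letter :: "'a \<Rightarrow> 'a \<Rightarrow> nat \<Rightarrow> 'a" where
  "last_letter a b n = (if odd n then b else a)"

lemma central_pair_sigma:
  "central_pair (central s a b n) (sigma s a b (Suc n)) (sigma s a b n)
     (last_letter a b (Suc n)) (last_letter a b n)"
proof (induction n)
  case 0
  have "a # replicate k a = replicate k a @ [a]" for k by (simp add: replicate_append_same)
  then show ?case by (simp add: central_pair_def last_letter_def)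
next
  case (Suc n)
  have "last_letter a b (Suc (Suc n)) = last_letter a b n" by (simp add: last_letter_def)
  with central_pair_step[OF Suc.IH, of "s (Suc (Suc n))"] show ?case by simp
qed

lemma sigma_ne: "sigma s a b n \<noteq> []"
  by (induction s a b n rule: sigma.induct) auto

lemma last_sigma: "last (sigma s a b n) = last_letter a b n"
proof (cases n)
  case (Suc m)
  have "sigma s a b m @ sigma s a b n = central s a b m @ [last_letter a b m, last_letter a b n]"
    using central_pair_sigma[of s a b m] unfolding central_pair_def Suc by (elim conjE)
  from arg_cong[where f = last, OF this] show ?thesis using sigma_ne[of s a b n] by simp
qed (simp add: last_letter_def)

definition word_prefix :: "'a list \<Rightarrow> (nat \<Rightarrow> 'a) \<Rightarrow> bool" where
  "word_prefix u w \<longleftrightarrow> (\<forall>i<length u. w i = u ! i)"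

lemma word_prefix_appendD: "word_prefix (u @ v) w \<Longrightarrow> word_prefix u w"
  unfolding word_prefix_def by (auto simp: nth_append)

lemma pal_prefix_if_word_prefix:
  assumes "word_prefix u w" "rev u = u"
  shows "pal_prefix w (length u)"
  unfolding pal_prefix_def
proof (intro allI impI)
  fix i assume i: "i < length u"
  have "w i = rev u ! i" using assms i unfolding word_prefix_def by simp
  also have "\<dots> = u ! (length u - 1 - i)" using i by (simp add: rev_nth)
  also have "\<dots> = w (length u - 1 - i)" using assms(1) i unfolding word_prefix_def by simp
  finally show "w i = w (length u - 1 - i)" .
qed

lemma pal_suffix_is_prefix: "rev (u @ v) = u @ v \<Longrightarrow> rev v = v \<Longrightarrow> u @ v = v @ rev u"
  by (metis rev_append)

locale directive_sequence =
  fixes s :: "nat \<Rightarrow> nat" and a b :: 'a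
  assumes s_pos: "1 \<le> k \<Longrightarrow> 0 < s k"
begin

definition len_sigma :: "nat \<Rightarrow> nat" where
  "len_sigma n = length (sigma s a b n)"

definition len_central :: "nat \<Rightarrow> nat" where
  "len_central n = length (central s a b n)"

text \<open>The palindromic prefix lengths \<open>pal_len n j\<close>, \<open>j < s (n + 2)\<close>, fill the interval from
  \<open>len_central n\<close> to \<open>len_central (Suc n)\<close> in steps of \<open>len_sigma (Suc n)\<close>.\<close>

definition pal_len :: "nat \<Rightarrow> nat \<Rightarrow> nat" where
  "pal_len n j = j * len_sigma (Suc n) + len_central n"

lemma len_sigma_0: "len_sigma 0 = 1"
  by (simp add: len_sigma_def)

lemma len_sigma_1: "len_sigma 1 = s 1"
  using s_pos[of 1] by (simp add: len_sigma_def)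

lemma len_sigma_Suc_Suc:
  "len_sigma (Suc (Suc n)) = s (Suc (Suc n)) * len_sigma (Suc n) + len_sigma n"
  by (simp add: len_sigma_def length_list_pow)

lemma len_central_0: "len_central 0 = s 1 - 1"
  by (simp add: len_central_def)

lemma len_central_Suc:
  "len_central (Suc n) = s (Suc (Suc n)) * len_sigma (Suc n) + len_central n"
  by (simp add: len_central_def len_sigma_def length_list_pow)

lemma len_central_add_2: "len_central n + 2 = len_sigma (Suc n) + len_sigma n"
proof -
  have "sigma s a b (Suc n) @ sigma s a b n =
      central s a b n @ [last_letter a b (Suc n), last_letter a b n]"
    using central_pair_sigma[of s a b n] unfolding central_pair_def by (elim conjE)
  from arg_cong[where f = length, OF this] show ?thesis
    unfolding len_central_def len_sigma_def by simp
qed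

lemma len_sigma_Suc_ge: "len_sigma n \<le> len_sigma (Suc n)"
proof (cases n)
  case 0 then show ?thesis using s_pos[of 1] len_sigma_0 len_sigma_1 by simp
next
  case (Suc m)
  have "len_sigma n \<le> s (Suc (Suc m)) * len_sigma n" using s_pos[of "Suc (Suc m)"] by simp
  then show ?thesis unfolding Suc len_sigma_Suc_Suc by linarith
qed

lemma len_sigma_mono: "m \<le> n \<Longrightarrow> len_sigma m \<le> len_sigma n"
  using len_sigma_Suc_ge by (rule lift_Suc_mono_le)

lemma len_sigma_pos: "0 < len_sigma n"
  using len_sigma_mono[of 0 n] by (simp add: len_sigma_0)

lemma len_sigma_Suc_less: "len_sigma (Suc n) < len_sigma (Suc (Suc n))"
proof -
  have "len_sigma (Suc n) \<le> s (Suc (Suc n)) * len_sigma (Suc n)"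
    using s_pos[of "Suc (Suc n)"] by simp
  then show ?thesis using len_sigma_Suc_Suc[of n] len_sigma_pos[of n] by linarith
qed

lemma len_sigma_ge: "n \<le> len_sigma n"
proof -
  have "Suc m \<le> len_sigma (Suc m)" for m
  proof (induction m)
    case (Suc m)
    then show ?case using len_sigma_Suc_less[of m] by simp
  qed (use len_sigma_pos[of 1] in simp)
  then show ?thesis by (cases n) auto
qed

lemma len_central_mono: "m \<le> n \<Longrightarrow> len_central m \<le> len_central n"
  by (rule lift_Suc_mono_le[of len_central]) (simp_all add: len_central_Suc)

lemma len_central_ge: "n \<le> len_central n"
  using len_central_add_2[of n] len_sigma_ge[of "Suc n"] len_sigma_pos[of n] by linarith

lemma len_central_le_pal_len: "len_central n \<le> pal_len n j"
  by (simp add: pal_len_def)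

lemma pal_len_0: "pal_len n 0 = len_central n"
  by (simp add: pal_len_def)

lemma pal_len_Suc: "pal_len n (Suc j) = pal_len n j + len_sigma (Suc n)"
  by (simp add: pal_len_def)

lemma pal_len_mono: "i \<le> j \<Longrightarrow> pal_len n i \<le> pal_len n j"
  by (simp add: pal_len_def)

lemma pal_len_less: "i < j \<Longrightarrow> pal_len n i + len_sigma (Suc n) \<le> pal_len n j"
  using pal_len_mono[of "Suc i" j n] by (simp add: pal_len_Suc)

lemma pal_len_last: "pal_len n (s (Suc (Suc n))) = len_central (Suc n)"
  by (simp add: pal_len_def len_central_Suc)

lemma pal_len_add_le_len_central:
  "j < s (Suc (Suc n)) \<Longrightarrow> pal_len n j + len_sigma (Suc n) \<le> len_central (Suc n)"
  using pal_len_less pal_len_last by metis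

lemma pal_len_add_le_of_less:
  assumes "m < n" "j < s (Suc (Suc m))"
  shows "pal_len m j + len_sigma (Suc m) \<le> len_central n"
  using pal_len_add_le_len_central[OF assms(2)] len_central_mono[of "Suc m" n] assms(1) by simp

lemma pal_len_add_2_le:
  assumes "m + 2 \<le> n" "j < s (Suc (Suc m))"
  shows "pal_len m j + 2 \<le> len_sigma n"
proof -
  have "pal_len m j + len_sigma (Suc m) + 2 \<le> len_central (Suc m) + 2"
    using pal_len_add_le_len_central[OF assms(2)] by simp
  also have "\<dots> = len_sigma (Suc (Suc m)) + len_sigma (Suc m)" by (rule len_central_add_2)
  finally have "pal_len m j + 2 \<le> len_sigma (Suc (Suc m))" by simp
  also have "\<dots> \<le> len_sigma n" using assms(1) by (intro len_sigma_mono) simp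
  finally show ?thesis .
qed

lemma len_central_le_pal_len_of_less: "m < n \<Longrightarrow> len_central (Suc m) \<le> pal_len n j"
  using len_central_mono[of "Suc m" n] len_central_le_pal_len[of n j] by simp

end

locale sturmian_word = directive_sequence s a b for s and a b :: 'a +
  fixes w :: "nat \<Rightarrow> 'a"
  assumes a_neq_b: "a \<noteq> b"
    and word_prefix_sigma: "1 \<le> n \<Longrightarrow> word_prefix (sigma s a b n) w"
begin

lemma sigma_prefix_sigma_Suc:
  assumes "1 \<le> n"
  shows "\<exists>z. sigma s a b (Suc n) = sigma s a b n @ z"
proof -
  obtain m where m: "n = Suc m" using assms by (cases n) auto
  obtain k where "s (Suc (Suc m)) = Suc k" using s_pos[of "Suc (Suc m)"] gr0_conv_Suc by auto
  then show ?thesis unfolding m by simp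
qed

lemma word_prefix_sigma_pair:
  assumes n: "1 \<le> n"
  shows "word_prefix (sigma s a b (Suc n) @ sigma s a b n) w"
proof -
  let ?x = "sigma s a b (Suc n)" and ?y = "sigma s a b n"
  obtain k where k: "s (Suc (Suc n)) = Suc k" using s_pos[of "Suc (Suc n)"] gr0_conv_Suc by auto
  have "\<exists>z. sigma s a b (Suc (Suc n)) = (?x @ ?y) @ z"
  proof (cases k)
    case 0 then show ?thesis using k by simp
  next
    case (Suc k')
    obtain z where z: "?x = ?y @ z" using sigma_prefix_sigma_Suc[OF n] by blast
    have "sigma s a b (Suc (Suc n)) = ?x @ ?x @ list_pow ?x k' @ ?y" using k Suc by simp
    then show ?thesis using z by (intro exI[of _ "z @ list_pow ?x k' @ ?y"]) simp
  qed
  then obtain z where z: "sigma s a b (Suc (Suc n)) = (?x @ ?y) @ z" by blast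
  have "word_prefix (sigma s a b (Suc (Suc n))) w" by (rule word_prefix_sigma) simp
  then show ?thesis unfolding z by (rule word_prefix_appendD)
qed

lemma word_prefix_central: "word_prefix (central s a b n) w"
proof (cases "n = 0")
  case True
  then show ?thesis using word_prefix_sigma[of 1] word_prefix_appendD by simp
next
  case False
  have "sigma s a b (Suc n) @ sigma s a b n =
      central s a b n @ [last_letter a b (Suc n), last_letter a b n]"
    using central_pair_sigma[of s a b n] unfolding central_pair_def by (elim conjE)
  with word_prefix_sigma_pair[of n] False
  have "word_prefix (central s a b n @ [last_letter a b (Suc n), last_letter a b n]) w" by simp
  then show ?thesis by (rule word_prefix_appendD)
qed

lemma word_prefix_pal_len:
  assumes j: "j \<le> s (Suc (Suc n))"
  shows "word_prefix (list_pow (sigma s a b (Suc n)) j @ central s a b n) w"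
proof -
  let ?X = "list_pow (sigma s a b (Suc n))" and ?c = "central s a b n" and ?k = "s (Suc (Suc n))"
  have "?X ?k = ?X ((?k - j) + j)" using j by simp
  then have split: "central s a b (Suc n) = ?X (?k - j) @ (?X j @ ?c)" by (simp add: replicate_add)
  have "rev (central s a b (Suc n)) = central s a b (Suc n)"
    using central_pair_sigma[of s a b "Suc n"] unfolding central_pair_def by blast
  then have "central s a b (Suc n) = (?X j @ ?c) @ rev (?X (?k - j))"
    unfolding split by (rule pal_suffix_is_prefix[OF _ central_pair_pal_pow[OF central_pair_sigma]])
  then show ?thesis using word_prefix_central[of "Suc n"] word_prefix_appendD by metis
qed

lemma length_pal_len_word:
  "length (list_pow (sigma s a b (Suc n)) j @ central s a b n) = pal_len n j"
  by (simp add: pal_len_def len_sigma_def len_central_def length_list_pow)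

lemma pal_len_in_pal_lengths: "j \<le> s (Suc (Suc n)) \<Longrightarrow> pal_len n j \<in> pal_lengths w"
  using pal_prefix_if_word_prefix[OF word_prefix_pal_len
      central_pair_pal_pow[OF central_pair_sigma]]
  unfolding pal_lengths_def length_pal_len_word by simp

lemma letter_pal_len:
  assumes j: "j < s (Suc (Suc n))"
  shows "w (pal_len n j) = last_letter a b (Suc n)"
proof -
  let ?x = "sigma s a b (Suc n)"
  let ?u = "list_pow ?x j @ central s a b n"
  have "list_pow ?x (Suc j) @ central s a b n = rev (?x @ ?u)"
    using central_pair_pal_pow[OF central_pair_sigma[of s a b n], of "Suc j"] by simp
  also have "\<dots> = ?u @ rev ?x"
    using central_pair_pal_pow[OF central_pair_sigma[of s a b n], of j] by simp
  finally have "word_prefix (?u @ rev ?x) w" using word_prefix_pal_len[of "Suc j" n] j by simp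
  moreover have "length ?u < length (?u @ rev ?x)" using sigma_ne[of s a b "Suc n"] by simp
  ultimately have "w (length ?u) = (?u @ rev ?x) ! (length ?u + 0)"
    unfolding word_prefix_def by simp
  also have "\<dots> = rev ?x ! 0" by (rule nth_append_length_plus)
  also have "\<dots> = last ?x" using sigma_ne[of s a b "Suc n"] by (simp add: rev_nth last_conv_nth)
  finally show ?thesis using last_sigma[of s a b "Suc n"] length_pal_len_word[of j n] by simp
qed

lemma letter_below_len_central_0: "i < len_central 0 \<Longrightarrow> w i = a"
  using word_prefix_central[of 0] unfolding word_prefix_def len_central_def by simp

lemma below_len_central_0_in_pal_lengths: "i < len_central 0 \<Longrightarrow> i \<in> pal_lengths w"
  unfolding pal_lengths_def pal_prefix_def using letter_below_len_central_0 by simp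

definition pal_set :: "nat set" where
  "pal_set = {..<len_central 0} \<union> {pal_len n j | n j. j < s (Suc (Suc n))}"

lemma pal_set_subset: "pal_set \<subseteq> pal_lengths w"
  unfolding pal_set_def using below_len_central_0_in_pal_lengths pal_len_in_pal_lengths by fastforce

lemma pal_len_in_pal_set: "j < s (Suc (Suc n)) \<Longrightarrow> pal_len n j \<in> pal_set"
  unfolding pal_set_def by blast

lemma len_central_0_in_pal_set: "len_central 0 \<in> pal_set"
  using pal_len_in_pal_set[of 0 0] s_pos[of "Suc (Suc 0)"] by (simp add: pal_len_0)

lemma pal_len_succ_in_pal_set:
  assumes j: "j < s (Suc (Suc n))"
  shows "pal_len n j + len_sigma (Suc n) \<in> pal_set"
proof (cases "Suc j < s (Suc (Suc n))")
  case True
  then show ?thesis using pal_len_in_pal_set pal_len_Suc by metis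
next
  case False
  then have "Suc j = s (Suc (Suc n))" using j by simp
  then have "pal_len n j + len_sigma (Suc n) = pal_len (Suc n) 0"
    using pal_len_Suc[of n j] pal_len_last[of n] pal_len_0[of "Suc n"] by simp
  then show ?thesis using pal_len_in_pal_set[of 0 "Suc n"] s_pos[of "Suc (Suc (Suc n))"] by simp
qed

lemma window_below_len_central_0:
  assumes j: "j < s (Suc (Suc n))" and Q: "Q < len_central 0"
    and window: "pal_len n j < Q + len_sigma (Suc n)"
  shows "w Q \<noteq> w (pal_len n j)"
proof (cases n)
  case 0
  then show ?thesis
    using letter_below_len_central_0[OF Q] letter_pal_len[OF j] a_neq_b
    by (simp add: last_letter_def)
next
  case (Suc m)
  have "Q + 2 \<le> len_sigma n" using Q len_central_0 len_sigma_1 len_sigma_mono[of 1 n] Suc by simp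
  then have "Q + len_sigma (Suc n) \<le> len_central n" using len_central_add_2[of n] by simp
  then show ?thesis using window len_central_le_pal_len[of n j] by simp
qed

lemma window_pal_len:
  assumes j: "j < s (Suc (Suc n))" and i: "i < s (Suc (Suc m))"
    and window: "pal_len n j < pal_len m i + len_sigma (Suc n)" "pal_len m i < pal_len n j"
  shows "w (pal_len m i) \<noteq> w (pal_len n j)"
proof -
  consider "m = n" | "n < m" | "m + 2 \<le> n" | "Suc m = n" by linarith
  then show ?thesis
  proof cases
    case 1
    then show ?thesis
      using window pal_len_less[of i j n] pal_len_mono[of j i n] by (cases "i < j") auto
  next
    case 2
    then show ?thesis
      using window pal_len_add_le_len_central[OF j] len_central_le_pal_len_of_less[of n m i] by simp
  next
    case 3
    have below: "pal_len m i + len_sigma (Suc m) \<le> len_central n"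
      using pal_len_add_le_of_less[OF _ i] 3 by simp
    show ?thesis
    proof (cases j)
      case 0
      have "pal_len m i + len_sigma (Suc n) \<le> pal_len n j"
        using pal_len_add_2_le[OF 3 i] len_central_add_2[of n] 0 by (simp add: pal_len_0)
      then show ?thesis using window by simp
    next
      case (Suc j')
      then show ?thesis
        using window below pal_len_less[of 0 j n] len_sigma_pos[of "Suc m"] by (simp add: pal_len_0)
    qed
  next
    case 4
    have "w (pal_len m i) = last_letter a b n" using letter_pal_len[OF i] 4 by simp
    moreover have "w (pal_len n j) = last_letter a b (Suc n)" using letter_pal_len[OF j] .
    ultimately show ?thesis using a_neq_b by (simp add: last_letter_def)
  qed
qed

lemma certified_successor_pal_len:
  assumes j: "j < s (Suc (Suc n))"
  shows "certified_successor w pal_set (pal_len n j) (pal_len n j + len_sigma (Suc n))"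
proof -
  have "len_sigma (Suc n) \<le> pal_len n j + 1"
    using len_central_add_2[of n] len_sigma_pos[of n] len_central_le_pal_len[of n j] by linarith
  moreover have "w Q \<noteq> w (pal_len n j)"
    if "Q \<in> pal_set" "pal_len n j < Q + len_sigma (Suc n)" "Q < pal_len n j" for Q
    using that window_below_len_central_0[OF j] window_pal_len[OF j] unfolding pal_set_def by blast
  ultimately show ?thesis using len_sigma_pos[of "Suc n"] unfolding certified_successor_def by auto
qed

lemma pal_set_certified: "P \<in> pal_set \<Longrightarrow> \<exists>P'\<in>pal_set. certified_successor w pal_set P P'"
proof (cases "P < len_central 0")
  case True
  have "P + 1 \<in> pal_set"
    using True len_central_0_in_pal_set unfolding pal_set_def
    by (cases "P + 1 = len_central 0") auto
  moreover have "certified_successor w pal_set P (P + 1)" unfolding certified_successor_def by auto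
  ultimately show ?thesis by blast
next
  case False
  moreover assume "P \<in> pal_set"
  ultimately obtain n j where "P = pal_len n j" "j < s (Suc (Suc n))" unfolding pal_set_def by blast
  then show ?thesis using pal_len_succ_in_pal_set certified_successor_pal_len by blast
qed

theorem pal_lengths_eq_pal_set: "pal_lengths w = pal_set"
proof (rule pal_lengths_eq_certified[OF pal_set_subset _ pal_set_certified])
  show "0 \<in> pal_set"
    using len_central_0_in_pal_set unfolding pal_set_def by (cases "len_central 0") auto
qed

lemma pal_len_gap:
  assumes j: "j < s (Suc (Suc n))"
  shows "{pal_len n j<..<pal_len n j + len_sigma (Suc n)} \<inter> pal_lengths w = {}"
proof -
  have "Q \<in> pal_set" if "pal_prefix w Q" for Q
    using that pal_lengths_eq_pal_set unfolding pal_lengths_def by blast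
  then show ?thesis
    using certified_successor_not_pal[OF _ pal_set_subset pal_len_in_pal_set[OF j]
        certified_successor_pal_len[OF j]]
    unfolding pal_lengths_def by auto
qed

end

lemma ratio_dichotomy:
  fixes A B C r :: real
  assumes r: "0 < r" "r\<^sup>2 + 3 * r = 1" and C: "3 * B + A \<le> C"
  shows "B \<le> r * C \<or> A \<le> r * B"
proof (cases "B \<le> r * C")
  case False
  have "r * A \<le> r * (C - 3 * B)" using C r(1) by (intro mult_left_mono) auto
  also have "\<dots> < B - 3 * r * B" using False by (simp add: algebra_simps)
  also have "\<dots> = r * (r * B) + B * (1 - (r\<^sup>2 + 3 * r))" by (simp add: power2_eq_square algebra_simps)
  also have "\<dots> = r * (r * B)" using r(2) by simp
  finally show ?thesis using r(1) by simp
qed simp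

text \<open>For consecutive lengths \<open>A, B, C, D\<close> with partial quotients in \<open>{1, 2}\<close> one has
  \<open>C / D \<ge> g (A / B)\<close> with \<open>g t = (1 + t) / (3 + 2t)\<close>, an increasing map with fixed point
  \<open>\<rho>\<close> and slope at most \<open>1/9\<close> on \<open>t \<ge> 0\<close>.\<close>

lemma two_step_ratio_bound:
  fixes A B C D \<rho> e :: real
  assumes A: "0 \<le> A" and B: "0 < B" and C: "B + A \<le> C" and D: "0 \<le> D" "D \<le> 2 * C + B"
    and \<rho>: "2 * \<rho>\<^sup>2 + 2 * \<rho> = 1" "1/3 \<le> \<rho>" "\<rho> \<le> 1/2" and e: "0 \<le> e"
    and ratio: "(\<rho> - e) * B \<le> A"
  shows "(\<rho> - e / 9) * D \<le> C"
proof -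
  have "B + A - \<rho> * (3 * B + 2 * A) = (1 - 2 * \<rho>) * (A - \<rho> * B) + B * (1 - (2 * \<rho>\<^sup>2 + 2 * \<rho>))"
    by (simp add: algebra_simps power2_eq_square)
  then have fixed_point: "B + A - \<rho> * (3 * B + 2 * A) = (1 - 2 * \<rho>) * (A - \<rho> * B)"
    using \<rho>(1) by simp
  have "(1 - 2 * \<rho>) * (- e * B) \<le> (1 - 2 * \<rho>) * (A - \<rho> * B)"
    using ratio \<rho>(3) by (intro mult_left_mono) (auto simp: algebra_simps)
  moreover have "(1 - 2 * \<rho>) * (e * B) \<le> (e / 9) * (3 * B + 2 * A)"
  proof -
    have "(1 - 2 * \<rho>) * (e * B) \<le> (1/3) * (e * B)" using \<rho>(2) e B by (intro mult_right_mono) auto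
    also have "\<dots> \<le> (e / 9) * (3 * B + 2 * A)" using e A by (simp add: algebra_simps)
    finally show ?thesis .
  qed
  ultimately have k1: "(\<rho> - e / 9) * (3 * B + 2 * A) \<le> B + A"
    using fixed_point by (simp add: algebra_simps)
  have "D * (B + A) \<le> (2 * C + B) * (B + A)" using D A B by (intro mult_right_mono) auto
  also have "\<dots> \<le> C * (3 * B + 2 * A)"
    using mult_left_mono[OF C, of B] B by (simp add: algebra_simps)
  finally have k2: "D * (B + A) \<le> C * (3 * B + 2 * A)" .
  have "(\<rho> - e / 9) * D * (3 * B + 2 * A) \<le> C * (3 * B + 2 * A)"
    using mult_right_mono[OF k1 D(1)] k2 by (simp add: algebra_simps)
  moreover have "0 < 3 * B + 2 * A" using A B by simp
  ultimately show ?thesis by simp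
qed

context directive_sequence
begin

lemma frequently_len_sigma_ratio_le:
  fixes r :: real
  assumes freq: "\<forall>M. \<exists>m\<ge>M. 3 \<le> s m" and r: "0 < r" "r\<^sup>2 + 3 * r = 1"
  shows "\<exists>n\<ge>N. real (len_sigma n) \<le> r * real (len_sigma (Suc n))"
proof -
  obtain m where m: "N + 2 \<le> m" "3 \<le> s m" using freq by blast
  define k where "k = m - 2"
  have "m = Suc (Suc k)" using m(1) unfolding k_def by simp
  then have k: "N \<le> k" "3 \<le> s (Suc (Suc k))" using m by simp_all
  have "3 * len_sigma (Suc k) \<le> s (Suc (Suc k)) * len_sigma (Suc k)"
    using k(2) by (intro mult_right_mono) auto
  then have "3 * len_sigma (Suc k) + len_sigma k \<le> len_sigma (Suc (Suc k))"
    using len_sigma_Suc_Suc[of k] by linarith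
  then have "real (3 * len_sigma (Suc k) + len_sigma k) \<le> real (len_sigma (Suc (Suc k)))"
    by (simp only: of_nat_le_iff)
  then have "3 * real (len_sigma (Suc k)) + real (len_sigma k) \<le> real (len_sigma (Suc (Suc k)))"
    by simp
  from ratio_dichotomy[OF r this] show ?thesis using k(1) le_SucI by blast
qed

lemma len_sigma_ratio_ge_geometric:
  fixes \<rho> :: real
  assumes small: "\<forall>m\<ge>M. s m \<le> 2" and \<rho>: "2 * \<rho>\<^sup>2 + 2 * \<rho> = 1" "1/3 \<le> \<rho>" "\<rho> \<le> 1/2"
  shows "(\<rho> - 3 * (1/3) ^ j) * real (len_sigma (Suc (M + j))) \<le> real (len_sigma (M + j))"
proof (induction j rule: nat_induct2)
  case 0
  have "(\<rho> - 3 * (1/3) ^ 0) * real (len_sigma (Suc (M + 0))) \<le> 0"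
    using \<rho> by (intro mult_nonpos_nonneg) auto
  then show ?case using of_nat_0_le_iff[of "len_sigma (M + 0)"] by linarith
next
  case 1
  have "(\<rho> - 3 * (1/3) ^ 1) * real (len_sigma (Suc (M + 1))) \<le> 0"
    using \<rho> by (intro mult_nonpos_nonneg) auto
  then show ?case using of_nat_0_le_iff[of "len_sigma (M + 1)"] by linarith
next
  case (step j)
  let ?A = "len_sigma (M + j)" and ?B = "len_sigma (Suc (M + j))"
    and ?C = "len_sigma (Suc (Suc (M + j)))" and ?D = "len_sigma (Suc (Suc (Suc (M + j))))"
  have "?B \<le> s (Suc (Suc (M + j))) * ?B" using s_pos[of "Suc (Suc (M + j))"] by simp
  then have "?B + ?A \<le> ?C" using len_sigma_Suc_Suc[of "M + j"] by linarith
  then have C: "real ?B + real ?A \<le> real ?C" by (simp only: of_nat_le_iff flip: of_nat_add)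
  have "s (Suc (Suc (Suc (M + j)))) * ?C \<le> 2 * ?C" using small by (intro mult_right_mono) auto
  then have "?D \<le> 2 * ?C + ?B" using len_sigma_Suc_Suc[of "Suc (M + j)"] by linarith
  then have "real ?D \<le> real (2 * ?C + ?B)" by (simp only: of_nat_le_iff)
  then have D: "real ?D \<le> 2 * real ?C + real ?B" by simp
  have B: "0 < real ?B" using len_sigma_pos[of "Suc (M + j)"] by simp
  have e: "0 \<le> 3 * (1/3 :: real) ^ j" by simp
  have "(\<rho> - 3 * (1/3) ^ j / 9) * real ?D \<le> real ?C"
    by (rule two_step_ratio_bound[OF of_nat_0_le_iff B C of_nat_0_le_iff D \<rho> e step])
  moreover have "3 * (1/3) ^ j / 9 = 3 * (1/3 :: real) ^ (j + 2)" by (simp add: power_add)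
  moreover have "M + (j + 2) = Suc (Suc (M + j))" by simp
  ultimately show ?case by (simp only:)
qed

lemma eventually_len_sigma_ratio_ge:
  fixes \<rho> :: real
  assumes small: "\<forall>m\<ge>M. s m \<le> 2" and \<rho>: "2 * \<rho>\<^sup>2 + 2 * \<rho> = 1" "1/3 \<le> \<rho>" "\<rho> \<le> 1/2"
    and d: "0 < d"
  shows "\<exists>K. \<forall>n\<ge>K. (\<rho> - d) * real (len_sigma (Suc n)) \<le> real (len_sigma n)"
proof -
  obtain j0 where j0: "(1/3 :: real) ^ j0 < d / 3"
    using real_arch_pow_inv[of "d / 3" "1/3 :: real"] d by auto
  have "(\<rho> - d) * real (len_sigma (Suc n)) \<le> real (len_sigma n)" if n: "M + j0 \<le> n" for n
  proof -
    have "(1/3 :: real) ^ (n - M) \<le> (1/3) ^ j0" using n by (intro power_decreasing) auto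
    then have "3 * (1/3 :: real) ^ (n - M) \<le> d" using j0 by linarith
    then have "(\<rho> - d) * real (len_sigma (Suc n))
        \<le> (\<rho> - 3 * (1/3) ^ (n - M)) * real (len_sigma (Suc n))"
      by (intro mult_right_mono) auto
    also have "\<dots> \<le> real (len_sigma n)"
      using len_sigma_ratio_ge_geometric[OF small \<rho>, of "n - M"] n by simp
    finally show ?thesis .
  qed
  then show ?thesis by blast
qed

lemma eventually_len_sigma_le_len_central:
  assumes small: "\<forall>m\<ge>M. s m \<le> 2" and \<epsilon>: "0 < \<epsilon>"
  shows "\<exists>K. \<forall>n\<ge>K. real (len_sigma (Suc n)) \<le> (sqrt 3 - 1 + \<epsilon>) * real (len_central n)"
proof -
  define \<rho> where "\<rho> = (sqrt 3 - 1) / 2"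
  define c where "c = sqrt 3 - 1 + \<epsilon>"
  have "5/3 \<le> sqrt 3" by (rule real_le_rsqrt) (simp add: power2_eq_square)
  moreover have "sqrt 3 \<le> 2" by (rule real_sqrt_le_iff[THEN iffD2, of 3 4, simplified])
  ultimately have sqrt3: "1 < sqrt 3" "5/3 \<le> sqrt 3" "sqrt 3 \<le> 2" "sqrt 3 * sqrt 3 = 3" by simp_all
  then have c: "0 < c" using \<epsilon> unfolding c_def by linarith
  have \<rho>: "2 * \<rho>\<^sup>2 + 2 * \<rho> = 1" "1/3 \<le> \<rho>" "\<rho> \<le> 1/2"
    using sqrt3 unfolding \<rho>_def by (simp_all add: power2_eq_square field_simps)
  have c_\<rho>: "c * (1 + \<rho>) = 1 + \<epsilon> * (1 + \<rho>)"
    using sqrt3(4) unfolding c_def \<rho>_def by (simp add: field_simps)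
  define \<delta> where "\<delta> = \<epsilon> / (2 * c)"
  have c_\<delta>: "c * \<delta> = \<epsilon> / 2" using c unfolding \<delta>_def by simp
  obtain K where K: "\<And>n. K \<le> n \<Longrightarrow> (\<rho> - \<delta>) * real (len_sigma (Suc n)) \<le> real (len_sigma n)"
    using eventually_len_sigma_ratio_ge[OF small \<rho>, of \<delta>] c \<epsilon> unfolding \<delta>_def by auto
  show ?thesis
  proof (intro exI allI impI)
    fix n assume n: "max K (nat \<lceil>4 * c / \<epsilon>\<rceil>) \<le> n"
    let ?X = "real (len_sigma n)" and ?Y = "real (len_sigma (Suc n))"
    have "4 * c / \<epsilon> \<le> real n" using n by linarith
    also have "\<dots> \<le> ?Y" using len_sigma_ge[of "Suc n"] by simp
    finally have Y: "4 * c \<le> \<epsilon> * ?Y" using \<epsilon> by (simp add: divide_le_eq mult.commute)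
    have "c * ((1 + \<rho> - \<delta>) * ?Y - 2) \<le> c * (?Y + ?X - 2)"
      using K[of n] n c by (intro mult_left_mono) (auto simp: algebra_simps)
    moreover have "c * ((1 + \<rho> - \<delta>) * ?Y - 2) = (c * (1 + \<rho>)) * ?Y - (c * \<delta>) * ?Y - 2 * c"
      by (simp add: algebra_simps)
    moreover have "\<dots> = ?Y + \<epsilon> * \<rho> * ?Y + (\<epsilon> * ?Y / 2 - 2 * c)"
      unfolding c_\<rho> c_\<delta> by (simp add: algebra_simps)
    moreover have "0 \<le> \<epsilon> * \<rho> * ?Y" using \<epsilon> \<rho>(2) by simp
    ultimately have "?Y \<le> c * (?Y + ?X - 2)" using Y by linarith
    moreover have "real (len_central n) = ?Y + ?X - 2"
      using len_central_add_2[of n] by (simp add: algebra_simps flip: of_nat_add)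
    ultimately have "?Y \<le> c * real (len_central n)" by simp
    then show "?Y \<le> (sqrt 3 - 1 + \<epsilon>) * real (len_central n)" unfolding c_def .
  qed
qed

end

context sturmian_word
begin

lemma delta_ge_if_frequently_3:
  assumes inf: "infinite (pal_lengths w)" and freq: "\<forall>M. \<exists>m\<ge>M. 3 \<le> s m"
  shows "ereal ((7 + sqrt 13) / 6) \<le> delta w"
  unfolding delta_def
proof (rule limsup_enumerate_ratio_ge[OF inf])
  fix N
  define r where "r = (sqrt 13 - 3) / 2"
  have sqrt13: "sqrt 13 * sqrt 13 = 13" "3 < sqrt 13" by (simp_all add: real_less_rsqrt)
  then have r: "0 < r" "r\<^sup>2 + 3 * r = 1"
    unfolding r_def by (simp_all add: power2_eq_square field_simps)
  obtain n where n: "N \<le> n" "real (len_sigma n) \<le> r * real (len_sigma (Suc n))"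
    using frequently_len_sigma_ratio_le[OF freq r] by blast
  let ?P = "len_central n" and ?q = "len_sigma (Suc n)"
  have s: "0 < s (Suc (Suc n))" using s_pos by simp
  have "?P \<in> pal_lengths w" "?P + ?q \<in> pal_lengths w"
    using pal_len_in_pal_lengths[of 0 n] pal_len_in_pal_lengths[of 1 n] s
    by (simp_all add: pal_len_def add.commute)
  moreover have "N \<le> ?P" using n(1) len_central_ge[of n] by simp
  moreover have "?P < ?P + ?q" using len_sigma_pos[of "Suc n"] by simp
  moreover have "{?P<..<?P + ?q} \<inter> pal_lengths w = {}"
    using pal_len_gap[OF s] by (simp add: pal_len_0)
  moreover have "(7 + sqrt 13) / 6 * real ?P \<le> real (?P + ?q)"
  proof -
    define \<beta> where "\<beta> = (7 + sqrt 13) / 6 - 1"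
    have \<beta>: "0 < \<beta>" "\<beta> * (1 + r) = 1"
      using sqrt13 unfolding \<beta>_def r_def by (simp_all add: field_simps)
    have "real (?P + 2) = real (?q + len_sigma n)" by (simp only: len_central_add_2)
    then have "real ?P \<le> (1 + r) * real ?q" using n(2) by (simp add: algebra_simps)
    then have "\<beta> * real ?P \<le> \<beta> * ((1 + r) * real ?q)" using \<beta>(1) by (intro mult_left_mono) auto
    also have "\<dots> = real ?q" using \<beta>(2) by (simp flip: mult.assoc)
    finally show ?thesis unfolding \<beta>_def by (simp add: algebra_simps)
  qed
  ultimately show "\<exists>n\<in>pal_lengths w. \<exists>n'\<in>pal_lengths w. N \<le> n \<and> n < n' \<and>
      {n<..<n'} \<inter> pal_lengths w = {} \<and> (7 + sqrt 13) / 6 * real n \<le> real n'"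
    by blast
qed

lemma delta_le_if_eventually_2:
  assumes inf: "infinite (pal_lengths w)" and small: "\<forall>m\<ge>M. s m \<le> 2"
  shows "delta w \<le> ereal (sqrt 3)"
  unfolding delta_def
proof (rule limsup_enumerate_ratio_le[OF inf])
  fix \<epsilon> :: real assume "0 < \<epsilon>"
  then obtain K where
    K: "\<And>n. K \<le> n \<Longrightarrow> real (len_sigma (Suc n)) \<le> (sqrt 3 - 1 + \<epsilon>) * real (len_central n)"
    using eventually_len_sigma_le_len_central[OF small] by blast
  have "1 < sqrt 3" by simp
  show "\<exists>N. \<forall>P\<in>pal_lengths w. N \<le> P \<longrightarrow> (\<exists>y\<in>pal_lengths w. P < y \<and> real y \<le> (sqrt 3 + \<epsilon>) * real P)"
  proof (intro exI ballI impI)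
    fix P assume P: "P \<in> pal_lengths w" "len_central K \<le> P"
    then have "\<not> P < len_central 0" using len_central_mono[of 0 K] by simp
    then obtain n j where n: "P = pal_len n j" "j < s (Suc (Suc n))"
      using P(1) unfolding pal_lengths_eq_pal_set pal_set_def by blast
    have "K \<le> n"
    proof (rule ccontr)
      assume "\<not> K \<le> n"
      then have "pal_len n j + len_sigma (Suc n) \<le> len_central K"
        using pal_len_add_le_of_less[OF _ n(2)] by simp
      then show False using P(2) n(1) len_sigma_pos[of "Suc n"] by simp
    qed
    let ?y = "P + len_sigma (Suc n)"
    have "?y \<in> pal_lengths w"
      using pal_len_succ_in_pal_set[OF n(2)] n(1) pal_lengths_eq_pal_set by simp
    moreover have "P < ?y" using len_sigma_pos[of "Suc n"] by simp
    moreover have "real ?y \<le> (sqrt 3 + \<epsilon>) * real P"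
    proof -
      have "(sqrt 3 - 1 + \<epsilon>) * real (len_central n) \<le> (sqrt 3 - 1 + \<epsilon>) * real P"
        using len_central_le_pal_len[of n j] n(1) \<open>0 < \<epsilon>\<close> \<open>1 < sqrt 3\<close>
        by (intro mult_left_mono) auto
      with K[OF \<open>K \<le> n\<close>] have "real (len_sigma (Suc n)) \<le> (sqrt 3 - 1 + \<epsilon>) * real P"
        by linarith
      then show ?thesis by (simp add: algebra_simps)
    qed
    ultimately show "\<exists>y\<in>pal_lengths w. P < y \<and> real y \<le> (sqrt 3 + \<epsilon>) * real P" by blast
  qed
qed

lemma delta_le_sqrt_3_or_ge:
  assumes "infinite (pal_lengths w)"
  shows "delta w \<le> ereal (sqrt 3) \<or> ereal ((7 + sqrt 13) / 6) \<le> delta w"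
proof (cases "\<forall>M. \<exists>m\<ge>M. 3 \<le> s m")
  case True
  then show ?thesis using delta_ge_if_frequently_3[OF assms] by simp
next
  case False
  then obtain M where "\<forall>m\<ge>M. s m < 3" using not_le by blast
  then have "\<forall>m\<ge>M. s m \<le> 2" by auto
  then show ?thesis using delta_le_if_eventually_2[OF assms] by simp
qed

end

lemma char_sturmian_obtain_sturmian_word:
  assumes "char_sturmian w"
  obtains s and a b :: 'a where "sturmian_word s a b w"
proof -
  obtain s and a b :: 'a where "a \<noteq> b" "\<forall>k\<ge>1. 0 < s k"
    "\<forall>n\<ge>1. \<forall>i<length (sigma s a b n). w i = sigma s a b n ! i"
    using assms unfolding char_sturmian_def by blast
  then have "sturmian_word s a b w"
    by unfold_locales (simp_all add: word_prefix_def)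
  then show ?thesis by (rule that)
qed

theorem proposition7p7:
  shows "\<not> (\<exists>d\<in>Dprime. ereal (sqrt 3) < d \<and> d < ereal ((7 + sqrt 13) / 6))"
proof
  assume "\<exists>d\<in>Dprime. ereal (sqrt 3) < d \<and> d < ereal ((7 + sqrt 13) / 6)"
  then obtain w :: "nat \<Rightarrow> nat" where inf: "infinite (pal_lengths w)"
    and word: "periodic_pal w \<or> char_sturmian w"
    and lo: "ereal (sqrt 3) < delta w" and hi: "delta w < ereal ((7 + sqrt 13) / 6)"
    unfolding Dprime_def by blast
  from word show False
  proof
    assume "periodic_pal w"
    then have "delta w \<le> 1" using delta_periodic_le_1 inf by blast
    also have "1 \<le> ereal (sqrt 3)" by (simp add: one_ereal_def)
    finally show False using lo by simp
  next
    assume "char_sturmian w"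
    then obtain s a b where "sturmian_word s a b w" by (rule char_sturmian_obtain_sturmian_word)
    then have "delta w \<le> ereal (sqrt 3) \<or> ereal ((7 + sqrt 13) / 6) \<le> delta w"
      using inf by (rule sturmian_word.delta_le_sqrt_3_or_ge)
    then show False using lo hi by (auto dest: leD)
  qed
qed

end
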